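(* Let $\xi$ be a Hausdorff convergence. Then $\xi$ has countable $\mathrm{S}_0$-character if and only if $\mathrm{I}_1\xi$ is a pretopology and $\xi$ is sequential (i.e., $\xi\ge\mathrm{T}\mathrm{I}_1\xi$). Moreover, in this case $\mathrm{I}_1\xi$ is the only pretopology $\sigma$ of countable character satisfying $\sigma\ge\xi\ge\mathrm{T}\sigma$.
   Context: A convergence $\xi$ on a set $X$ is a relation between filters on $X$ and points, written $x\in\lim_\xi\mathcal{F}$, with $\mathcal{F}\le\mathcal{G}\Rightarrow\lim_\xi\mathcal{F}\subset\lim_\xi\mathcal{G}$ and $x\in\lim_\xi\{x\}^\uparrow$. For convergences on the same set, $\xi\ge\theta$ ($\xi$ finer) means $\lim_\xi\mathcal{F}\subset\lim_\theta\mathcal{F}$ for every filter $\mathcal{F}$. $\xi$ is Hausdorff if every filter has at most one limit point. Vicinity filter $\mathcal{V}_\xi(x)$: intersection of all filters converging to $x$; $\xi$ is a pretopology if $x\in\lim_\xi\mathcal{V}_\xi(x)$ for all $x$. A set $O$ is $\xi$-open if $\lim_\xi\mathcal{F}\cap O\ne\emptyset\Rightarrow O\in\mathcal{F}$; $\mathrm{T}\xi$ is the topology of $\xi$-open sets. $\mathrm{I}_1\xi$ is the convergence with $x\in\lim_{\mathrm{I}_1\xi}\mathcal{F}$ iff there is a filter $\mathcal{H}\le\mathcal{F}$ with a countable filter-base and $x\in\lim_\xi\mathcal{H}$; $\xi$ has countable character if $\xi=\mathrm{I}_1\xi$. $\xi$ is sequential if $\xi\ge\mathrm{T}\mathrm{I}_1\xi$.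 $\xi$ has countable $\mathrm{S}_0$-character if there is a pretopology $\sigma$ of countable character on the same set with $\sigma\ge\xi\ge\mathrm{T}\sigma$. *)

theory Defs
  imports Main "HOL-Library.Countable_Set"
begin

text \<open>A convergence on the type 'a (the whole type plays the role of the set X) is
  modelled as a map from filters to sets of limit points.  Filters in the paper are
  non-degenerate, so every notion below only looks at proper filters (F \<noteq> bot).
  Note: Isabelle's filter order is reversed w.r.t. the paper: paper F \<le> G
  (G finer) is Isabelle G \<le> F.\<close>

type_synonym 'a conv = "'a filter \<Rightarrow> 'a set"

definition is_convergence :: "'a conv \<Rightarrow> bool" where
  "is_convergence \<xi> \<longleftrightarrow>
     (\<forall>F G. F \<noteq> bot \<longrightarrow> G \<noteq> bot \<longrightarrow> G \<le> F \<longrightarrow> \<xi> F \<subseteq> \<xi> G) \<and>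
     (\<forall>x. x \<in> \<xi> (principal {x}))"

text \<open>\<xi> \<ge> \<theta> in the paper (\<xi> finer than \<theta>).\<close>
definition conv_finer :: "'a conv \<Rightarrow> 'a conv \<Rightarrow> bool" where
  "conv_finer \<xi> \<theta> \<longleftrightarrow> (\<forall>F. F \<noteq> bot \<longrightarrow> \<xi> F \<subseteq> \<theta> F)"

definition conv_eq :: "'a conv \<Rightarrow> 'a conv \<Rightarrow> bool" where
  "conv_eq \<xi> \<theta> \<longleftrightarrow> (\<forall>F. F \<noteq> bot \<longrightarrow> \<xi> F = \<theta> F)"

definition hausdorff_conv :: "'a conv \<Rightarrow> bool" where
  "hausdorff_conv \<xi> \<longleftrightarrow> (\<forall>F x y. F \<noteq> bot \<longrightarrow> x \<in> \<xi> F \<longrightarrow> y \<in> \<xi> F \<longrightarrow> x = y)"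

text \<open>Vicinity filter: intersection (= Sup in Isabelle's order) of all filters converging to x.\<close>
definition vicinity :: "'a conv \<Rightarrow> 'a \<Rightarrow> 'a filter" where
  "vicinity \<xi> x = Sup {F. F \<noteq> bot \<and> x \<in> \<xi> F}"

definition pretopology :: "'a conv \<Rightarrow> bool" where
  "pretopology \<xi> \<longleftrightarrow> (\<forall>x. x \<in> \<xi> (vicinity \<xi> x))"

definition conv_open :: "'a conv \<Rightarrow> 'a set \<Rightarrow> bool" where
  "conv_open \<xi> U \<longleftrightarrow> (\<forall>F. F \<noteq> bot \<longrightarrow> \<xi> F \<inter> U \<noteq> {} \<longrightarrow> eventually (\<lambda>y. y \<in> U) F)"

definition topologizer :: "'a conv \<Rightarrow> 'a conv" where
  "topologizer \<xi> F = {x. \<forall>U. conv_open \<xi> U \<longrightarrow> x \<in> U \<longrightarrow> eventually (\<lambda>y. y \<in> U) F}"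

definition countably_based :: "'a filter \<Rightarrow> bool" where
  "countably_based H \<longleftrightarrow>
     (\<exists>B. countable B \<and> (\<forall>A. eventually (\<lambda>x. x \<in> A) H \<longleftrightarrow> (\<exists>b\<in>B. b \<subseteq> A)))"

definition I1 :: "'a conv \<Rightarrow> 'a conv" where
  "I1 \<xi> F = {x. \<exists>H. H \<noteq> bot \<and> F \<le> H \<and> countably_based H \<and> x \<in> \<xi> H}"

definition countable_character :: "'a conv \<Rightarrow> bool" where
  "countable_character \<xi> \<longleftrightarrow> conv_eq \<xi> (I1 \<xi>)"

definition sequential_conv :: "'a conv \<Rightarrow> bool" where
  "sequential_conv \<xi> \<longleftrightarrow> conv_finer \<xi> (topologizer (I1 \<xi>))"

definition S0_witness :: "'a conv \<Rightarrow> 'a conv \<Rightarrow> bool" where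
  "S0_witness \<xi> \<sigma> \<longleftrightarrow> is_convergence \<sigma> \<and> pretopology \<sigma> \<and> countable_character \<sigma> \<and>
     conv_finer \<sigma> \<xi> \<and> conv_finer \<xi> (topologizer \<sigma>)"

definition countable_S0_character :: "'a conv \<Rightarrow> bool" where
  "countable_S0_character \<xi> \<longleftrightarrow> (\<exists>\<sigma>. S0_witness \<xi> \<sigma>)"

end

theory Submission
  imports Defs
begin

text \<open>If \<sigma> witnesses countable S0-character, then every countably based filter H with
  x \<in> lim\<xi> H refines the \<sigma>-vicinity of x, so x \<in> lim\<sigma> H because \<sigma> is a pretopology;
  hence \<sigma> = I1 \<xi>. Otherwise some V in the \<sigma>-vicinity of x is missed by a sequence s
  below H. By Hausdorffness, a countably based filter \<sigma>-converging to a point outside the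
  range of s can neither be refined by a subsequence of s (its limit would be x, so it
  would contain V) nor contain a single term of s; so the complement of the range of s is
  \<sigma>-open. It contains x, which is a T\<sigma>-limit of s because \<xi> \<ge> T\<sigma>: a contradiction.\<close>

lemma eventually_INF_antimono_principal:
  fixes W :: "nat \<Rightarrow> 'a set"
  assumes "antimono W"
  shows "eventually P (INF n. principal (W n)) \<longleftrightarrow> (\<exists>n. \<forall>x\<in>W n. P x)"
proof -
  have "\<exists>k. principal (W k) \<le> inf (principal (W m)) (principal (W n))" for m n :: nat
    using assms by (intro exI[of _ "max m n"]) (auto simp: antimono_def)
  then show ?thesis
    by (subst eventually_INF_base) (auto simp: eventually_principal)
qed

lemma countably_based_antimono_base:
  assumes "countably_based H"
  obtains W :: "nat \<Rightarrow> 'a set" where "antimono W" and "H = (INF n. principal (W n))"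
proof -
  obtain B where "countable B" and B: "\<And>A. eventually (\<lambda>x. x \<in> A) H \<longleftrightarrow> (\<exists>b\<in>B. b \<subseteq> A)"
    using assms unfolding countably_based_def by blast
  have "B \<noteq> {}"
    using B[of UNIV] by auto
  define W where "W n = (\<Inter>i\<le>n. from_nat_into B i)" for n
  have "antimono W"
    unfolding W_def by (intro antimonoI) auto
  have "eventually P H \<longleftrightarrow> (\<exists>n. \<forall>x\<in>W n. P x)" for P
  proof
    assume "eventually P H"
    then obtain b where "b \<in> B" "b \<subseteq> {x. P x}"
      using B[of "{x. P x}"] by auto
    moreover obtain i where "from_nat_into B i = b"
      using from_nat_into_surj[OF \<open>countable B\<close> \<open>b \<in> B\<close>] by blast
    ultimately show "\<exists>n. \<forall>x\<in>W n. P x"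
      unfolding W_def by blast
  next
    assume "\<exists>n. \<forall>x\<in>W n. P x"
    then obtain n where n: "\<forall>x\<in>W n. P x" ..
    have "eventually (\<lambda>x. x \<in> from_nat_into B i) H" for i
      using B from_nat_into[OF \<open>B \<noteq> {}\<close>] by blast
    then have "eventually (\<lambda>x. \<forall>i\<in>{..n}. x \<in> from_nat_into B i) H"
      by (intro eventually_ball_finite) auto
    then show "eventually P H"
      by (rule eventually_mono) (use n in \<open>auto simp: W_def\<close>)
  qed
  then have "H = (INF n. principal (W n))"
    by (simp add: filter_eq_iff eventually_INF_antimono_principal[OF \<open>antimono W\<close>])
  with \<open>antimono W\<close> show thesis ..
qed

lemma countably_based_obtain_seq:
  assumes "countably_based H" and "\<not> eventually P H"
  obtains s :: "nat \<Rightarrow> 'a" where "filtermap s sequentially \<le> H" and "\<And>n. \<not> P (s n)"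
proof -
  obtain W :: "nat \<Rightarrow> 'a set" where "antimono W" and H: "H = (INF n. principal (W n))"
    using countably_based_antimono_base[OF assms(1)] by blast
  have "\<forall>n. \<exists>z\<in>W n. \<not> P z"
    using assms(2) unfolding H eventually_INF_antimono_principal[OF \<open>antimono W\<close>] by blast
  then obtain s where s: "\<And>n. s n \<in> W n \<and> \<not> P (s n)"
    by metis
  have "eventually (\<lambda>k. s k \<in> W n) sequentially" for n
    unfolding eventually_sequentially
    using s \<open>antimono W\<close> by (auto dest: antimonoD)
  then have "filtermap s sequentially \<le> H"
    by (simp add: H le_INF_iff le_principal eventually_filtermap)
  with s show thesis
    using that by simp
qed

lemma countably_based_subseq_or_finite:
  fixes s :: "nat \<Rightarrow> 'a"
  assumes "countably_based H"
  obtains r where "strict_mono r" and "filtermap (s \<circ> r) sequentially \<le> H"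
    | A where "eventually (\<lambda>x. x \<in> A) H" and "finite {n. s n \<in> A}"
proof -
  obtain W :: "nat \<Rightarrow> 'a set" where "antimono W" and H: "H = (INF n. principal (W n))"
    using countably_based_antimono_base[OF assms] by blast
  show thesis
  proof (cases "\<forall>k. \<exists>\<^sub>F n in sequentially. s n \<in> W k")
    case True
    then have "\<exists>r. \<forall>k. s (r k) \<in> W k \<and> r k < r (Suc k)"
      by (intro dependent_nat_choice) (auto simp: frequently_sequentially, metis Suc_le_eq)
    then obtain r where r: "\<And>k. s (r k) \<in> W k" and "\<And>k. r k < r (Suc k)"
      by blast
    then have "strict_mono r"
      by (simp add: strict_mono_Suc_iff)
    have "eventually (\<lambda>m. s (r m) \<in> W k) sequentially" for k
      unfolding eventually_sequentially using r \<open>antimono W\<close> by (auto dest: antimonoD)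
    then have "filtermap (s \<circ> r) sequentially \<le> H"
      by (simp add: H le_INF_iff le_principal eventually_filtermap)
    with \<open>strict_mono r\<close> show thesis
      using that(1) by blast
  next
    case False
    then obtain k where "\<not> (\<exists>\<^sub>F n in sequentially. s n \<in> W k)"
      by blast
    then have "finite {n. s n \<in> W k}"
      by (simp add: frequently_cofinite flip: cofinite_eq_sequentially)
    moreover have "eventually (\<lambda>x. x \<in> W k) H"
      unfolding H eventually_INF_antimono_principal[OF \<open>antimono W\<close>] by blast
    ultimately show thesis
      using that(2) by blast
  qed
qed

lemma convergence_limit_mono:
  assumes "is_convergence \<xi>" and "G \<noteq> bot" and "G \<le> F" and "x \<in> \<xi> F"
  shows "x \<in> \<xi> G"
proof -
  have "F \<noteq> bot"
    using assms(2,3) bot_unique by blast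
  with assms show ?thesis
    unfolding is_convergence_def by blast
qed

lemma le_vicinity: "F \<noteq> bot \<Longrightarrow> x \<in> \<xi> F \<Longrightarrow> F \<le> vicinity \<xi> x"
  unfolding vicinity_def by (rule Sup_upper) simp

lemma principal_le_vicinity: "is_convergence \<xi> \<Longrightarrow> principal {x} \<le> vicinity \<xi> x"
  by (rule le_vicinity) (simp_all add: is_convergence_def principal_eq_bot_iff)

lemma vicinity_neq_bot: "is_convergence \<xi> \<Longrightarrow> vicinity \<xi> x \<noteq> bot"
  using principal_le_vicinity[of \<xi> x] by (auto simp: bot_unique principal_eq_bot_iff)

lemma hausdorff_conv_limits_eq:
  assumes "is_convergence \<xi>" and "hausdorff_conv \<xi>" and "G \<noteq> bot"
    and "G \<le> F1" and "G \<le> F2" and "x \<in> \<xi> F1" and "y \<in> \<xi> F2"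
  shows "x = y"
proof -
  have "x \<in> \<xi> G" and "y \<in> \<xi> G"
    using convergence_limit_mono[OF assms(1,3)] assms(4-7) by blast+
  with assms(2,3) show ?thesis
    unfolding hausdorff_conv_def by blast
qed

lemma hausdorff_conv_eventually_neq:
  assumes "is_convergence \<xi>" and "hausdorff_conv \<xi>" and "H \<noteq> bot"
    and "y \<in> \<xi> H" and "y \<noteq> z"
  shows "eventually (\<lambda>w. w \<noteq> z) H"
proof (rule ccontr)
  assume "\<not> eventually (\<lambda>w. w \<noteq> z) H"
  then have "principal {z} \<le> H"
    unfolding le_filter_def eventually_principal
    using eventually_mono[of P H "\<lambda>w. w \<noteq> z" for P] by blast
  moreover have "z \<in> \<xi> (principal {z})"
    using assms(1) by (simp add: is_convergence_def)
  ultimately have "y = z"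
    using hausdorff_conv_limits_eq[OF assms(1,2), of "principal {z}" H "principal {z}"] assms(4)
    by (simp add: principal_eq_bot_iff)
  with assms(5) show False ..
qed

lemma filtermap_subseq_le:
  assumes "strict_mono r"
  shows "filtermap (s \<circ> r) sequentially \<le> filtermap s sequentially"
  unfolding le_filter_def eventually_filtermap eventually_sequentially
  by (metis assms comp_apply le_trans strict_mono_imp_increasing)

lemma conv_open_compl_range:
  fixes s :: "nat \<Rightarrow> 'a"
  assumes \<xi>: "is_convergence \<xi>" "hausdorff_conv \<xi>"
    and \<sigma>: "is_convergence \<sigma>" "countable_character \<sigma>" "conv_finer \<sigma> \<xi>"
    and x: "x \<in> \<xi> (filtermap s sequentially)"
    and V: "eventually V (vicinity \<sigma> x)" "\<And>n. \<not> V (s n)"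
  shows "conv_open \<sigma> (- range s)"
  unfolding conv_open_def
proof (intro allI impI)
  fix F assume "F \<noteq> bot" and "\<sigma> F \<inter> - range s \<noteq> {}"
  then obtain y H where y: "y \<notin> range s" and H: "H \<noteq> bot" "F \<le> H" "countably_based H" "y \<in> \<sigma> H"
    using \<sigma>(2) unfolding countable_character_def conv_eq_def I1_def by blast
  have y\<xi>: "y \<in> \<xi> H"
    using \<sigma>(3) H(1,4) unfolding conv_finer_def by blast
  have "eventually (\<lambda>z. z \<in> - range s) H"
  proof (rule countably_based_subseq_or_finite[OF H(3), of s])
    fix r assume "strict_mono r" and GH: "filtermap (s \<circ> r) sequentially \<le> H"
    have "y = x"
      using hausdorff_conv_limits_eq[OF \<xi>, of "filtermap (s \<circ> r) sequentially"] GH y\<xi> x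
        filtermap_subseq_le[OF \<open>strict_mono r\<close>, of s]
      by (simp add: filtermap_bot_iff)
    then have "eventually V H"
      using V(1) le_vicinity[where \<xi>=\<sigma>, OF H(1,4)] filter_leD by blast
    then have "eventually (\<lambda>n. V (s (r n))) sequentially"
      using filter_leD[OF GH] by (simp add: eventually_filtermap)
    with V(2) show ?thesis
      by simp
  next
    fix A assume A: "eventually (\<lambda>x. x \<in> A) H" and "finite {n. s n \<in> A}"
    then have "eventually (\<lambda>z. \<forall>n\<in>{n. s n \<in> A}. z \<noteq> s n) H"
      using hausdorff_conv_eventually_neq[OF \<xi> H(1) y\<xi>] y
      by (intro eventually_ball_finite) auto
    with A show ?thesis
      by eventually_elim auto
  qed
  then show "eventually (\<lambda>z. z \<in> - range s) F"
    using H(2) filter_leD by blast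
qed

lemma S0_witness_countably_based_limit:
  assumes \<xi>: "is_convergence \<xi>" "hausdorff_conv \<xi>" and w: "S0_witness \<xi> \<sigma>"
    and H: "H \<noteq> bot" "countably_based H" "x \<in> \<xi> H"
  shows "x \<in> \<sigma> H"
proof -
  have \<sigma>: "is_convergence \<sigma>" "pretopology \<sigma>" "countable_character \<sigma>" "conv_finer \<sigma> \<xi>"
    "conv_finer \<xi> (topologizer \<sigma>)"
    using w unfolding S0_witness_def by auto
  have "H \<le> vicinity \<sigma> x"
  proof (rule ccontr)
    assume "\<not> H \<le> vicinity \<sigma> x"
    then obtain V where V: "eventually V (vicinity \<sigma> x)" "\<not> eventually V H"
      unfolding le_filter_def by blast
    then obtain s where SH: "filtermap s sequentially \<le> H" and s: "\<And>n. \<not> V (s n)"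
      using countably_based_obtain_seq[OF H(2)] by blast
    have x_seq: "x \<in> \<xi> (filtermap s sequentially)"
      using convergence_limit_mono[OF \<xi>(1) _ SH H(3)] by (simp add: filtermap_bot_iff)
    then have "x \<in> topologizer \<sigma> (filtermap s sequentially)"
      using \<sigma>(5) unfolding conv_finer_def by (metis filtermap_bot_iff sequentially_bot subsetD)
    moreover have "conv_open \<sigma> (- range s)"
      using conv_open_compl_range[OF \<xi> \<sigma>(1,3,4) x_seq V(1) s] .
    moreover have "x \<in> - range s"
      using V(1) principal_le_vicinity[OF \<sigma>(1)] s
      by (auto simp: le_filter_def eventually_principal)
    ultimately have "eventually (\<lambda>n. s n \<in> - range s) sequentially"
      unfolding topologizer_def eventually_filtermap by blast
    then show False
      by simp
  qed
  then show "x \<in> \<sigma> H"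
    using \<sigma>(2) convergence_limit_mono[OF \<sigma>(1) H(1)] unfolding pretopology_def by blast
qed
lemma S0_witness_conv_eq_I1:
  assumes \<xi>: "is_convergence \<xi>" "hausdorff_conv \<xi>" and w: "S0_witness \<xi> \<sigma>"
  shows "conv_eq \<sigma> (I1 \<xi>)"
  unfolding conv_eq_def
proof (intro allI impI equalityI subsetI)
  have \<sigma>: "is_convergence \<sigma>" "countable_character \<sigma>" "conv_finer \<sigma> \<xi>"
    using w unfolding S0_witness_def by auto
  fix F :: "'a filter" and x assume "F \<noteq> bot"
  {
    assume "x \<in> \<sigma> F"
    then obtain H where "H \<noteq> bot" "F \<le> H" "countably_based H" "x \<in> \<sigma> H"
      using \<sigma>(2) \<open>F \<noteq> bot\<close> unfolding countable_character_def conv_eq_def I1_def by blast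
    with \<sigma>(3) show "x \<in> I1 \<xi> F"
      unfolding conv_finer_def I1_def by blast
  next
    assume "x \<in> I1 \<xi> F"
    then obtain H where H: "H \<noteq> bot" "F \<le> H" "countably_based H" "x \<in> \<xi> H"
      unfolding I1_def by blast
    then have "x \<in> \<sigma> H"
      using S0_witness_countably_based_limit[OF \<xi> w] by blast
    with H(2) show "x \<in> \<sigma> F"
      using convergence_limit_mono[OF \<sigma>(1) \<open>F \<noteq> bot\<close>] by blast
  }
qed

lemma conv_eq_sym: "conv_eq \<sigma> \<tau> \<Longrightarrow> conv_eq \<tau> \<sigma>"
  unfolding conv_eq_def by auto

lemma vicinity_conv_eq: "conv_eq \<sigma> \<tau> \<Longrightarrow> vicinity \<sigma> = vicinity \<tau>"
  unfolding conv_eq_def vicinity_def by (intro ext arg_cong[of _ _ Sup]) auto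

lemma topologizer_conv_eq: "conv_eq \<sigma> \<tau> \<Longrightarrow> topologizer \<sigma> = topologizer \<tau>"
proof -
  assume "conv_eq \<sigma> \<tau>"
  then have "conv_open \<sigma> = conv_open \<tau>"
    unfolding conv_eq_def conv_open_def by (intro ext) auto
  then show ?thesis
    unfolding topologizer_def by simp
qed

lemma I1_conv_eq: "conv_eq \<sigma> \<tau> \<Longrightarrow> I1 \<sigma> = I1 \<tau>"
  unfolding conv_eq_def I1_def by (intro ext) auto

lemma S0_witness_conv_eq:
  assumes e: "conv_eq \<sigma> \<tau>" and w: "S0_witness \<xi> \<sigma>"
  shows "S0_witness \<xi> \<tau>"
proof -
  have \<sigma>: "is_convergence \<sigma>" "pretopology \<sigma>" "countable_character \<sigma>" "conv_finer \<sigma> \<xi>"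
    "conv_finer \<xi> (topologizer \<sigma>)"
    using w unfolding S0_witness_def by auto
  have eq: "\<And>F. F \<noteq> bot \<Longrightarrow> \<tau> F = \<sigma> F"
    using e unfolding conv_eq_def by auto
  have "is_convergence \<tau>"
    using \<sigma>(1) eq unfolding is_convergence_def by (metis insert_not_empty principal_eq_bot_iff)
  moreover have "pretopology \<tau>"
    using \<sigma>(2) eq vicinity_neq_bot[OF \<sigma>(1)]
    unfolding pretopology_def vicinity_conv_eq[OF e] by metis
  moreover have "countable_character \<tau>"
    using \<sigma>(3) eq unfolding countable_character_def conv_eq_def I1_conv_eq[OF e] by metis
  moreover have "conv_finer \<tau> \<xi>"
    using \<sigma>(4) eq unfolding conv_finer_def by metis
  ultimately show ?thesis
    using \<sigma>(5) unfolding S0_witness_def topologizer_conv_eq[OF e] by blast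
qed

lemma is_convergence_I1:
  assumes "is_convergence \<xi>"
  shows "is_convergence (I1 \<xi>)"
  unfolding is_convergence_def
proof (intro conjI allI impI)
  fix F G :: "'a filter" assume "G \<le> F"
  then show "I1 \<xi> F \<subseteq> I1 \<xi> G"
    unfolding I1_def using order_trans by blast
next
  fix x :: 'a
  have "countably_based (principal {x})"
    unfolding countably_based_def by (intro exI[of _ "{{x}}"]) (auto simp: eventually_principal)
  then show "x \<in> I1 \<xi> (principal {x})"
    using assms unfolding I1_def is_convergence_def
    by (intro CollectI exI[of _ "principal {x}"]) (simp add: principal_eq_bot_iff)
qed

lemma countable_character_I1: "countable_character (I1 \<xi>)"
  unfolding countable_character_def conv_eq_def I1_def
  by (blast intro: order_trans)

lemma conv_finer_I1: "is_convergence \<xi> \<Longrightarrow> conv_finer (I1 \<xi>) \<xi>"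
  unfolding conv_finer_def I1_def by (blast intro: convergence_limit_mono)

lemma S0_witness_I1_iff:
  "is_convergence \<xi> \<Longrightarrow> S0_witness \<xi> (I1 \<xi>) \<longleftrightarrow> pretopology (I1 \<xi>) \<and> sequential_conv \<xi>"
  unfolding S0_witness_def sequential_conv_def
  using is_convergence_I1 countable_character_I1 conv_finer_I1 by blast

theorem proposition2p7:
  fixes \<xi> :: "'a conv"
  assumes "is_convergence \<xi>" and "hausdorff_conv \<xi>"
  shows "(countable_S0_character \<xi> \<longleftrightarrow> pretopology (I1 \<xi>) \<and> sequential_conv \<xi>) \<and>
         (countable_S0_character \<xi> \<longrightarrow> (\<forall>\<sigma>. S0_witness \<xi> \<sigma> \<longleftrightarrow> conv_eq \<sigma> (I1 \<xi>)))"
proof -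
  have I1_witness: "S0_witness \<xi> (I1 \<xi>)" if S0: "countable_S0_character \<xi>"
  proof -
    obtain \<sigma> where \<sigma>: "S0_witness \<xi> \<sigma>"
      using S0 unfolding countable_S0_character_def by blast
    show ?thesis
      using S0_witness_conv_eq[OF S0_witness_conv_eq_I1[OF assms \<sigma>] \<sigma>] .
  qed
  then have "countable_S0_character \<xi> \<longleftrightarrow> S0_witness \<xi> (I1 \<xi>)"
    unfolding countable_S0_character_def by blast
  moreover have "S0_witness \<xi> \<sigma> \<longleftrightarrow> conv_eq \<sigma> (I1 \<xi>)" if "S0_witness \<xi> (I1 \<xi>)" for \<sigma>
    using that S0_witness_conv_eq_I1[OF assms] S0_witness_conv_eq conv_eq_sym by blast
  ultimately show ?thesis
    using S0_witness_I1_iff[OF assms(1)] by blast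
qed

end
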